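(* Let $n\ge 3$ and $f=x^n+a_{n-1}x^{n-1}+\cdots+a_0\in\mathbb{C}[x]$ with roots $r_1,\ldots,r_n$ (with multiplicity). Define the polynomials \[f_1(x,y)=\frac{f(y)-f(x)}{y-x},\qquad f_3(x,y)=\frac{f(y)-2f\left(\frac{x+y}{2}\right)+f(x)}{\frac{(y-x)^2}{2}}.\] Let $D_2=\prod_{1\le i,j,k\le n,\ i<j,\ j\ne k,\ k\ne i}(2r_k-r_i-r_j)$. Then $\operatorname{res}(f,\operatorname{res}(f_1,f_3,y),x)=0$ if and only if $D_2=0$.
   Context: The quotients defining $f_1,f_3$ are polynomials in $x,y$. $\operatorname{res}$ denotes the Sylvester resultant with respect to the indicated variable. *)

theory Defs
  imports Complex_Main "HOL-Computational_Algebra.Polynomial" "Subresultants.Resultant_Prelim"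
begin

text \<open>Bivariate polynomials in x,y are represented as \<open>complex poly poly\<close>:
  polynomials in the (outer) variable y whose coefficients are polynomials in x.\<close>

definition var_x :: "complex poly poly" where
  "var_x = [: [:0, 1:] :]"

definition var_y :: "complex poly poly" where
  "var_y = [: 0, 1 :]"

definition in_y :: "complex poly \<Rightarrow> complex poly poly" where
  "in_y f = map_poly (\<lambda>c. [:c:]) f"

definition in_x :: "complex poly \<Rightarrow> complex poly poly" where
  "in_x f = [: f :]"

definition at_mid :: "complex poly \<Rightarrow> complex poly poly" where
  "at_mid f = pcompose (in_y f) (smult [:1/2:] (var_x + var_y))"

definition f1 :: "complex poly \<Rightarrow> complex poly poly" where
  "f1 f = (in_y f - in_x f) div (var_y - var_x)"

text \<open>f_3 = (f(y) - 2 f((x+y)/2) + f(x)) / ((y-x)^2/2)  (exact division).\<close>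
definition f3 :: "complex poly \<Rightarrow> complex poly poly" where
  "f3 f = (2 * (in_y f - 2 * at_mid f + in_x f)) div ((var_y - var_x) ^ 2)"

text \<open>D_2 for roots r_0,...,r_{n-1} (0-based indexing).\<close>
definition D2 :: "nat \<Rightarrow> (nat \<Rightarrow> complex) \<Rightarrow> complex" where
  "D2 n r = (\<Prod>(i,j,k)\<in>{(i,j,k). i < n \<and> j < n \<and> k < n \<and> i < j \<and> j \<noteq> k \<and> k \<noteq> i}.
               2 * r k - r i - r j)"

end

theory Submission
  imports Defs "Subresultants.Subresultant_Gcd" "HOL-Computational_Algebra.Field_as_Ring"
    "HOL-Computational_Algebra.Fundamental_Theorem_Algebra"
begin

text \<open>Since f1 and f3 have constant leading coefficients in y, their resultant commutes with
  substituting a root \<open>x = r_k\<close> of f. There f1 becomes the cofactor \<open>f(y)/(y - r_k)\<close>, so the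
  inner resultant vanishes iff \<open>f3(r_k, r_i) = 0\<close> for some \<open>i \<noteq> k\<close>. If \<open>r_i \<noteq> r_k\<close>, the defining
  identity of f3 turns this into \<open>f((r_i + r_k)/2) = 0\<close>; if \<open>r_i = r_k\<close>, then \<open>f = (y - r_k)^2 g\<close>
  and \<open>f3(r_k, r_k) = g(r_k)\<close>. Either way the condition is \<open>2 r_j = r_i + r_k\<close> for a third
  index j, i.e. a vanishing factor of D2.\<close>

lemma resultant_eq_0_iff_common_root:
  fixes p q :: "'a :: {alg_closed_field, field_gcd} poly"
  assumes "p \<noteq> 0"
  shows "resultant p q = 0 \<longleftrightarrow> (\<exists>x. poly p x = 0 \<and> poly q x = 0)"
proof -
  have gcd_nonzero: "gcd p q \<noteq> 0" using assms by simp
  have "degree (gcd p q) \<noteq> 0 \<longleftrightarrow> (\<exists>x. poly (gcd p q) x = 0)"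
  proof
    assume "degree (gcd p q) \<noteq> 0"
    then show "\<exists>x. poly (gcd p q) x = 0" by (intro alg_closed_imp_poly_has_root) simp
  next
    assume "\<exists>x. poly (gcd p q) x = 0"
    then show "degree (gcd p q) \<noteq> 0"
      using gcd_nonzero by (metis degree_eq_zeroE pCons_0_0 poly_const_conv)
  qed
  moreover have "poly (gcd p q) x = 0 \<longleftrightarrow> poly p x = 0 \<and> poly q x = 0" for x
    by (simp add: poly_eq_0_iff_dvd)
  ultimately show ?thesis by (simp add: resultant_0_gcd)
qed

lemma linear_power2_dvd_of_double_root:
  fixes p :: "'a::idom poly"
  assumes "poly p a = 0" and "poly (pderiv p) a = 0"
  shows "[:-a,1:]^2 dvd p"
proof -
  from assms(1) obtain q where q: "p = [:-a,1:] * q" by (metis dvdE poly_eq_0_iff_dvd)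
  have "pderiv p = q + [:-a,1:] * pderiv q" unfolding q pderiv_mult by (simp add: pderiv_pCons)
  then have "poly q a = 0" using assms(2) by simp
  then obtain s where s: "q = [:-a,1:] * s" by (metis dvdE poly_eq_0_iff_dvd)
  show ?thesis unfolding q s by (metis power2_eq_square mult.assoc dvd_triv_left)
qed

lemma degree_linear_power_mult:
  fixes p :: "'a::idom poly"
  shows "degree ([:c,1:]^m * p) = (if p = 0 then 0 else m + degree p)"
  using degree_linear_power[of c m] by (simp add: degree_mult_eq)

lemma degree_eq_of_linear_power_mult:
  fixes p :: "'a::idom poly"
  assumes "[:c,1:]^m * p = q" and "q \<noteq> 0"
  shows "degree p = degree q - m"
  using assms degree_linear_power_mult[of c m p] by auto

lemma degree_le_of_linear_power_mult:
  fixes p :: "'a::idom poly"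
  assumes "[:c,1:]^m * p = q"
  shows "degree p \<le> degree q - m"
  using assms degree_linear_power_mult[of c m p] by (cases "p = 0") auto

lemma degree_diff_const:
  fixes f :: "'a::comm_ring poly"
  assumes "degree f > 0"
  shows "degree (f - [:c:]) = degree f"
proof -
  have "degree (f - [:c:]) = degree (f + [:-c:])" 
    by (simp add: diff_conv_add_uminus del: add_uminus_conv_diff)
  also have "\<dots> = degree f" using assms by (intro degree_add_eq_left) simp
  finally show ?thesis .
qed

lemma two_mult_half_power_neq_one:
  assumes "N \<ge> 2"
  shows "2 * (1/2::complex)^N \<noteq> 1"
proof -
  have "2 * (1/2::real)^N \<le> 2 * (1/2)^2"
    using assms by (intro mult_left_mono power_decreasing) auto
  then have "2 * (1/2::real)^N \<noteq> 1" by (simp add: power2_eq_square)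
  have "2 * (1/2::complex)^N = of_real (2 * (1/2)^N)" by simp
  then show ?thesis using \<open>2 * (1/2::real)^N \<noteq> 1\<close> by (metis of_real_eq_1_iff)
qed

abbreviation eval_x :: "complex \<Rightarrow> complex poly poly \<Rightarrow> complex poly" where
  "eval_x a \<equiv> map_poly (\<lambda>c. poly c a)"

interpretation eval_x: map_poly_idom_hom "\<lambda>c :: complex poly. poly c a" ..

lemma var_y_minus_var_x: "var_y - var_x = [:-[:0,1:], 1:]"
  by (simp add: var_x_def var_y_def)

lemma poly_in_y_diagonal: "poly (in_y f) (pCons 0 1) = f"
  unfolding in_y_def
  by (induct f) (auto simp: map_poly_pCons algebra_simps pCons_eq_iff)

lemma pderiv_in_y: "pderiv (in_y f) = in_y (pderiv f)"
  unfolding in_y_def by (rule poly_eqI) (simp add: coeff_pderiv coeff_map_poly of_nat_poly)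

lemma eval_x_in_y: "eval_x a (in_y f) = f"
  unfolding in_y_def by (simp add: map_poly_map_poly o_def)

lemma eval_x_in_x: "eval_x a (in_x f) = [:poly f a:]"
  unfolding in_x_def by (simp add: map_poly_simps)

lemma eval_x_var_y_minus_var_x: "eval_x a (var_y - var_x) = [:-a,1:]"
  by (simp add: var_y_minus_var_x)

lemma eval_x_at_mid: "eval_x a (at_mid f) = f \<circ>\<^sub>p [:a/2,1/2:]"
  unfolding at_mid_def poly_hom.map_poly_pcompose eval_x_in_y
  by (simp add: var_x_def var_y_def)

lemma var_y_minus_var_x_mult_f1: "(var_y - var_x) * f1 f = in_y f - in_x f"
proof -
  have "poly (in_y f - in_x f) [:0,1:] = 0" by (simp add: poly_in_y_diagonal in_x_def)
  then have "var_y - var_x dvd in_y f - in_x f"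
    unfolding var_y_minus_var_x by (simp only: poly_eq_0_iff_dvd)
  then show ?thesis unfolding f1_def by (rule dvd_mult_div_cancel)
qed

lemma var_y_minus_var_x_power2_mult_f3:
  "(var_y - var_x)^2 * f3 f = 2 * (in_y f - 2 * at_mid f + in_x f)"
proof -
  \<comment> \<open>The numerator and its y-derivative both vanish on the diagonal \<open>y = x\<close>.\<close>
  define m where "m = smult [:1/2:] (var_x + var_y)"
  have m: "m = [:[:0,1/2:],[:1/2:]:]" unfolding m_def var_x_def var_y_def by simp
  have poly_m: "poly m (pCons 0 1) = pCons 0 1" unfolding m by simp
  have at_mid: "at_mid f = in_y f \<circ>\<^sub>p m" unfolding at_mid_def m_def ..
  let ?F = "2 * (in_y f - 2 * at_mid f + in_x f)"
  have "poly ?F (pCons 0 1) = 0"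
    by (simp add: at_mid poly_pcompose poly_m poly_in_y_diagonal in_x_def)
  moreover have "pderiv ?F = 2 * (in_y (pderiv f) - 2 * ((in_y (pderiv f) \<circ>\<^sub>p m) * [:[:1/2:]:]))"
  proof -
    have "pderiv (2 :: complex poly poly) = 0" by (metis pderiv_of_nat of_nat_numeral)
    moreover have "pderiv m = [:[:1/2:]:]" unfolding m by (simp add: pderiv_pCons)
    ultimately show ?thesis
      by (simp add: pderiv_mult pderiv_add pderiv_diff at_mid pderiv_pcompose pderiv_in_y pderiv_smult in_x_def)
  qed
  then have "poly (pderiv ?F) (pCons 0 1) = 2 * (pderiv f - 2 * (pderiv f * [:1/2:]))"
    by (simp add: poly_pcompose poly_m poly_in_y_diagonal)
  then have "poly (pderiv ?F) (pCons 0 1) = 0"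
    by (simp add: numeral_poly algebra_simps)
  ultimately have "[:-pCons 0 1, 1:]^2 dvd ?F" by (rule linear_power2_dvd_of_double_root)
  then show ?thesis unfolding f3_def var_y_minus_var_x by (simp add: dvd_mult_div_cancel)
qed

lemma eval_x_f1: "[:-a,1:] * eval_x a (f1 f) = f - [:poly f a:]"
  using arg_cong[OF var_y_minus_var_x_mult_f1, of "eval_x a" f]
  unfolding eval_x.hom_mult eval_x_var_y_minus_var_x
  by (simp only: eval_x.hom_minus eval_x_in_y eval_x_in_x)

lemma eval_x_f3:
  "[:-a,1:]^2 * eval_x a (f3 f) = 2 * (f - 2 * (f \<circ>\<^sub>p [:a/2,1/2:]) + [:poly f a:])"
  using arg_cong[OF var_y_minus_var_x_power2_mult_f3, of "eval_x a" f]
  unfolding eval_x.hom_mult eval_x.hom_power eval_x_var_y_minus_var_x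
  by (simp only: eval_x.hom_add eval_x.hom_minus eval_x.hom_mult eval_x.hom_numeral
      eval_x_in_y eval_x_in_x eval_x_at_mid)

lemma degree_second_difference:
  fixes f :: "complex poly"
  assumes "degree f \<ge> 2"
  shows "degree (f - 2 * (f \<circ>\<^sub>p [:a/2,1/2:]) + [:c:]) = degree f"
proof (rule antisym)
  let ?N = "degree f" and ?g = "f \<circ>\<^sub>p [:a/2,1/2:]"
  have degree_g: "degree ?g = ?N" by (simp add: degree_pcompose)
  show "degree (f - 2 * ?g + [:c:]) \<le> ?N"
    using degree_mult_le[of 2 ?g] degree_g
    by (intro degree_add_le degree_diff_le) auto
  have "coeff ?g ?N = lead_coeff f * (1/2)^?N"
    using lead_coeff_comp[of "[:a/2,1/2:]" f] degree_g by simp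
  moreover have "coeff [:c:] ?N = 0" using assms by (intro coeff_eq_0) auto
  ultimately have "coeff (f - 2 * ?g + [:c:]) ?N = lead_coeff f * (1 - 2 * (1/2)^?N)"
    by (simp add: numeral_poly algebra_simps)
  moreover have "lead_coeff f \<noteq> 0" using assms by auto
  ultimately have "coeff (f - 2 * ?g + [:c:]) ?N \<noteq> 0"
    using two_mult_half_power_neq_one[OF assms] by simp
  then show "?N \<le> degree (f - 2 * ?g + [:c:])" by (rule le_degree)
qed

lemma degree_bivariate_second_difference_le:
  "degree (in_y f - 2 * at_mid f + in_x f) \<le> degree f"
proof -
  have in_y: "degree (in_y f) \<le> degree f" by (simp add: in_y_def degree_map_poly_le)
  have "degree (at_mid f) \<le> degree (in_y f) * degree (smult [:1/2:] (var_x + var_y))"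
    unfolding at_mid_def by (rule degree_pcompose_le)
  also have "\<dots> \<le> degree f" using in_y by (simp add: var_x_def var_y_def)
  finally have "degree (2 * at_mid f) \<le> degree f"
    using degree_mult_le[of 2 "at_mid f"] by simp
  then show ?thesis using in_y by (intro degree_add_le degree_diff_le) (auto simp: in_x_def)
qed

lemma degree_f1:
  assumes "degree f > 0"
  shows "degree (f1 f) = degree f - 1" and "degree (eval_x a (f1 f)) = degree f - 1"
proof -
  have "degree (eval_x a (f1 f)) = degree (f - [:poly f a:]) - 1"
    using eval_x_f1[of a f] assms degree_diff_const[OF assms, of "poly f a"]
    by (intro degree_eq_of_linear_power_mult[of "-a" 1]) auto
  then have eval: "degree (eval_x a (f1 f)) = degree f - 1"
    by (simp add: degree_diff_const[OF assms])
  have "degree (f1 f) \<le> degree (in_y f - in_x f) - 1"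
    using var_y_minus_var_x_mult_f1[of f] unfolding var_y_minus_var_x
    by (intro degree_le_of_linear_power_mult[where m = 1]) simp
  also have "degree (in_y f - in_x f) \<le> degree f"
    by (rule degree_diff_le) (auto simp: in_y_def in_x_def degree_map_poly_le)
  finally have "degree (f1 f) \<le> degree f - 1" by simp
  with eval degree_map_poly_le[of "\<lambda>c. poly c a" "f1 f"]
  show "degree (f1 f) = degree f - 1" "degree (eval_x a (f1 f)) = degree f - 1" by auto
qed

lemma degree_f3:
  assumes "degree f \<ge> 2"
  shows "degree (f3 f) = degree f - 2" and "degree (eval_x a (f3 f)) = degree f - 2"
proof -
  let ?R = "f - 2 * (f \<circ>\<^sub>p [:a/2,1/2:]) + [:poly f a:]"
  have degree_R: "degree (2 * ?R) = degree f"
    using degree_second_difference[OF assms] by (simp add: numeral_poly)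
  then have "2 * ?R \<noteq> 0" using assms by auto
  with eval_x_f3[of a f] have "degree (eval_x a (f3 f)) = degree (2 * ?R) - 2"
    by (rule degree_eq_of_linear_power_mult)
  then have eval: "degree (eval_x a (f3 f)) = degree f - 2" by (simp only: degree_R)
  have "degree (f3 f) \<le> degree (2 * (in_y f - 2 * at_mid f + in_x f)) - 2"
    using var_y_minus_var_x_power2_mult_f3[of f] unfolding var_y_minus_var_x
    by (rule degree_le_of_linear_power_mult)
  also have "\<dots> \<le> degree f - 2"
    using degree_bivariate_second_difference_le[of f] by (simp add: numeral_poly)
  finally have "degree (f3 f) \<le> degree f - 2" .
  with eval degree_map_poly_le[of "\<lambda>c. poly c a" "f3 f"]
  show "degree (f3 f) = degree f - 2" "degree (eval_x a (f3 f)) = degree f - 2" by auto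
qed

lemma poly_resultant_f1_f3:
  assumes "degree f \<ge> 2"
  shows "poly (resultant (f1 f) (f3 f)) a = resultant (eval_x a (f1 f)) (eval_x a (f3 f))"
  using assms degree_f1(1)[of f] degree_f1(2)[of f a] degree_f3(1)[of f] degree_f3(2)[of f a]
  by (intro poly_hom.resultant_map_poly[symmetric]) auto

lemma eval_x_f1_at_root:
  assumes "f = [:-a,1:] * g"
  shows "eval_x a (f1 f) = g"
proof -
  have "[:-a,1:] * eval_x a (f1 f) = [:-a,1:] * g"
    using eval_x_f1[of a f] assms by simp
  then show ?thesis by (rule mult_left_cancel[THEN iffD1, rotated]) simp
qed

lemma poly_eval_x_f3_at_roots:
  assumes "poly f a = 0" and "poly f b = 0"
  shows "(b - a)^2 * poly (eval_x a (f3 f)) b = -4 * poly f ((a + b)/2)"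
proof -
  have "(b - a)^2 * poly (eval_x a (f3 f)) b = poly ([:-a,1:]^2 * eval_x a (f3 f)) b" by simp
  also have "\<dots> = -4 * poly f ((a + b)/2)"
    unfolding eval_x_f3 using assms by (simp add: poly_pcompose add_divide_distrib)
  finally show ?thesis .
qed

lemma eval_x_f3_at_double_root:
  assumes "f = [:-a,1:]^2 * g"
  shows "eval_x a (f3 f) = 2 * g - g \<circ>\<^sub>p [:a/2,1/2:]"
proof -
  have "[:-a,1:]^2 * eval_x a (f3 f) = [:-a,1:]^2 * (2 * g - g \<circ>\<^sub>p [:a/2,1/2:])"
  proof (rule poly_eq_poly_eq_iff[THEN iffD1], rule ext)
    fix y
    show "poly ([:-a,1:]^2 * eval_x a (f3 f)) y = poly ([:-a,1:]^2 * (2 * g - g \<circ>\<^sub>p [:a/2,1/2:])) y"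
      unfolding eval_x_f3 using assms by (simp add: poly_pcompose power2_eq_square field_simps)
  qed
  then show ?thesis by (rule mult_left_cancel[THEN iffD1, rotated]) simp
qed

lemma poly_eval_x_f3_at_roots_eq_0_iff:
  fixes r :: "nat \<Rightarrow> complex"
  assumes f: "f = (\<Prod>l<n. [:-r l, 1:])" and "k < n" "i < n" "i \<noteq> k"
  shows "poly (eval_x (r k) (f3 f)) (r i) = 0 \<longleftrightarrow> (\<exists>j<n. j \<noteq> i \<and> j \<noteq> k \<and> 2 * r j = r i + r k)"
proof (cases "r i = r k")
  case False
  have "(r i - r k)^2 * poly (eval_x (r k) (f3 f)) (r i) = -4 * poly f ((r k + r i)/2)"
    using assms by (intro poly_eval_x_f3_at_roots) (auto simp: poly_prod prod_zero_iff)
  then have "poly (eval_x (r k) (f3 f)) (r i) = 0 \<longleftrightarrow> poly f ((r k + r i)/2) = 0"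
    using False by auto
  also have "\<dots> \<longleftrightarrow> (\<exists>j<n. (r k + r i)/2 = r j)"
    unfolding f poly_prod by (auto simp: prod_zero_iff)
  also have "\<dots> \<longleftrightarrow> (\<exists>j<n. 2 * r j = r i + r k)"
  proof -
    have "(r k + r i)/2 = r j \<longleftrightarrow> 2 * r j = r i + r k" for j by (auto simp: field_simps)
    then show ?thesis by blast
  qed
  also have "\<dots> \<longleftrightarrow> (\<exists>j<n. j \<noteq> i \<and> j \<noteq> k \<and> 2 * r j = r i + r k)"
    using False by (auto simp: algebra_simps)
  finally show ?thesis .
next
  case True
  define g where "g = (\<Prod>l\<in>{..<n} - {i} - {k}. [:-r l, 1:])"
  have "f = [:-r i, 1:] * (\<Prod>l\<in>{..<n} - {i}. [:-r l, 1:])"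
    unfolding f using assms(3) by (subst prod.remove[of _ i]) auto
  also have "(\<Prod>l\<in>{..<n} - {i}. [:-r l, 1:]) = [:-r k, 1:] * g"
    unfolding g_def using assms(2,4) by (subst prod.remove[of _ k]) auto
  finally have "f = [:-r k, 1:]^2 * g" by (simp only: True power2_eq_square mult.assoc)
  then have "poly (eval_x (r k) (f3 f)) (r i) = poly g (r k)"
    by (simp add: eval_x_f3_at_double_root poly_pcompose True)
  also have "\<dots> = 0 \<longleftrightarrow> (\<exists>j\<in>{..<n} - {i} - {k}. r k = r j)"
    unfolding g_def poly_prod by (simp add: prod_zero_iff)
  also have "\<dots> \<longleftrightarrow> (\<exists>j<n. j \<noteq> i \<and> j \<noteq> k \<and> 2 * r j = r i + r k)"
  proof -
    have "2 * r j = r i + r k \<longleftrightarrow> r k = r j" for j unfolding True by auto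
    then show ?thesis by auto
  qed
  finally show ?thesis .
qed

lemma resultant_eval_x_f1_f3_at_root_eq_0_iff:
  fixes r :: "nat \<Rightarrow> complex"
  assumes f: "f = (\<Prod>l<n. [:-r l, 1:])" and "k < n"
  shows "resultant (eval_x (r k) (f1 f)) (eval_x (r k) (f3 f)) = 0 \<longleftrightarrow>
    (\<exists>i<n. \<exists>j<n. i \<noteq> k \<and> j \<noteq> i \<and> j \<noteq> k \<and> 2 * r j = r i + r k)"
proof -
  define g where "g = (\<Prod>l\<in>{..<n} - {k}. [:-r l, 1:])"
  have "f = [:-r k, 1:] * g" unfolding f g_def using assms(2) by (simp add: prod.remove[of _ k])
  then have "eval_x (r k) (f1 f) = g" by (rule eval_x_f1_at_root)
  moreover have "g \<noteq> 0" unfolding g_def by (simp add: prod_zero_iff)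
  ultimately have "resultant (eval_x (r k) (f1 f)) (eval_x (r k) (f3 f)) = 0 \<longleftrightarrow>
      (\<exists>x. poly g x = 0 \<and> poly (eval_x (r k) (f3 f)) x = 0)"
    by (simp add: resultant_eq_0_iff_common_root)
  also have "\<dots> \<longleftrightarrow> (\<exists>i<n. i \<noteq> k \<and> poly (eval_x (r k) (f3 f)) (r i) = 0)"
    unfolding g_def poly_prod by (auto simp: prod_zero_iff)
  also have "\<dots> \<longleftrightarrow> (\<exists>i<n. \<exists>j<n. i \<noteq> k \<and> j \<noteq> i \<and> j \<noteq> k \<and> 2 * r j = r i + r k)"
    using poly_eval_x_f3_at_roots_eq_0_iff[OF f assms(2)] by blast
  finally show ?thesis .
qed

lemma D2_eq_0_iff:
  "D2 n r = 0 \<longleftrightarrow> (\<exists>i<n. \<exists>j<n. \<exists>k<n. i \<noteq> j \<and> j \<noteq> k \<and> k \<noteq> i \<and> 2 * r k = r i + r j)"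
proof -
  \<comment> \<open>D2 only ranges over \<open>i < j\<close>, but the condition is symmetric in i and j.\<close>
  let ?S = "{(i,j,k). i < n \<and> j < n \<and> k < n \<and> i < j \<and> j \<noteq> k \<and> k \<noteq> i}"
  have "finite ?S"
    by (rule finite_subset[of _ "{..<n} \<times> {..<n} \<times> {..<n}"]) auto
  then have "D2 n r = 0 \<longleftrightarrow>
      (\<exists>i<n. \<exists>j<n. \<exists>k<n. i < j \<and> j \<noteq> k \<and> k \<noteq> i \<and> 2 * r k = r i + r j)"
    unfolding D2_def by (auto simp: prod_zero_iff algebra_simps)
  also have "\<dots> \<longleftrightarrow> (\<exists>i<n. \<exists>j<n. \<exists>k<n. i \<noteq> j \<and> j \<noteq> k \<and> k \<noteq> i \<and> 2 * r k = r i + r j)"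
  proof
    assume "\<exists>i<n. \<exists>j<n. \<exists>k<n. i \<noteq> j \<and> j \<noteq> k \<and> k \<noteq> i \<and> 2 * r k = r i + r j"
    then obtain i j k where "i < n" "j < n" "k < n" "i \<noteq> j" "j \<noteq> k" "k \<noteq> i"
      and "2 * r k = r i + r j" by blast
    moreover have "2 * r k = r j + r i" using \<open>2 * r k = r i + r j\<close> by (simp add: add.commute)
    ultimately show "\<exists>i<n. \<exists>j<n. \<exists>k<n. i < j \<and> j \<noteq> k \<and> k \<noteq> i \<and> 2 * r k = r i + r j"
      by (metis linorder_neqE_nat)
  qed auto
  finally show ?thesis .
qed

theorem proposition5:
  fixes n :: nat and r :: "nat \<Rightarrow> complex" and f :: "complex poly"
  assumes "n \<ge> 3"
    and "f = (\<Prod>i<n. [:- r i, 1:])"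
  shows "resultant f (resultant (f1 f) (f3 f)) = 0 \<longleftrightarrow> D2 n r = 0"
proof -
  have "degree f = n" unfolding assms(2) by (simp add: degree_prod_eq_sum_degree)
  have "f \<noteq> 0" unfolding assms(2) by (simp add: prod_zero_iff)
  moreover have "poly f x = 0 \<longleftrightarrow> (\<exists>k<n. x = r k)" for x
    unfolding assms(2) poly_prod by (auto simp: prod_zero_iff)
  ultimately have "resultant f (resultant (f1 f) (f3 f)) = 0 \<longleftrightarrow>
      (\<exists>k<n. poly (resultant (f1 f) (f3 f)) (r k) = 0)"
    by (auto simp: resultant_eq_0_iff_common_root)
  also have "\<dots> \<longleftrightarrow> (\<exists>k<n. resultant (eval_x (r k) (f1 f)) (eval_x (r k) (f3 f)) = 0)"
    using assms(1) \<open>degree f = n\<close> by (simp add: poly_resultant_f1_f3)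
  also have "\<dots> \<longleftrightarrow> D2 n r = 0"
    unfolding D2_eq_0_iff using resultant_eval_x_f1_f3_at_root_eq_0_iff[OF assms(2)] by blast
  finally show ?thesis .
qed

end
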